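(* Let $P$ be a finite poset, $R$ a commutative unital ring, and $D$ a derivation of $I^3(P,R)$. Then for all $x\in P$, $$D(e_x)=\sum_{v\in P,\ x<v}D(e_x)(x,x,v)\,e_{xxv}+\sum_{u\in P,\ u<x}D(e_x)(u,x,x)\,e_{uxx}.$$
   Context: For a finite poset $P$, $P^3_\le=\{(x,y,z)\in P^3: x\le y\le z\}$, and $I^3(P,R)$ is the $R$-module of functions $f:P^3_\le\to R$ with multiplication $(fg)(x_1,x_2,x_3)=\sum f(x_1,y_1,y_2)g(y_1,y_2,x_3)$ over all $x_1\le y_1\le x_2\le y_2\le x_3$. For $x\le y\le z$, $e_{xyz}$ is the function equal to $1$ at $(x,y,z)$ and $0$ elsewhere, and $e_x:=e_{xxx}$. A derivation is an $R$-linear map $D:I^3(P,R)\to I^3(P,R)$ with $D(fg)=D(f)g+fD(g)$. *)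

theory Defs
  imports Main
begin

text \<open>The finite poset P is the type 'a of class order and finite.
  Elements of I^3(P,R) are functions 'a => 'a => 'a => 'r that vanish
  outside P^3_le = {(x,y,z). x <= y <= z}.\<close>

definition I3 :: "('a::{order,finite} \<Rightarrow> 'a \<Rightarrow> 'a \<Rightarrow> 'r::comm_ring_1) set" where
  "I3 = {f. \<forall>x y z. \<not> (x \<le> y \<and> y \<le> z) \<longrightarrow> f x y z = 0}"

definition mult3 ::
  "('a::{order,finite} \<Rightarrow> 'a \<Rightarrow> 'a \<Rightarrow> 'r::comm_ring_1) \<Rightarrow> ('a \<Rightarrow> 'a \<Rightarrow> 'a \<Rightarrow> 'r) \<Rightarrow> ('a \<Rightarrow> 'a \<Rightarrow> 'a \<Rightarrow> 'r)" where
  "mult3 f g = (\<lambda>x1 x2 x3. if x1 \<le> x2 \<and> x2 \<le> x3 then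
      (\<Sum>(y1, y2) \<in> {(y1, y2). x1 \<le> y1 \<and> y1 \<le> x2 \<and> x2 \<le> y2 \<and> y2 \<le> x3}.
         f x1 y1 y2 * g y1 y2 x3)
    else 0)"

definition e3 :: "'a::{order,finite} \<Rightarrow> 'a \<Rightarrow> 'a \<Rightarrow> ('a \<Rightarrow> 'a \<Rightarrow> 'a \<Rightarrow> 'r::comm_ring_1)" where
  "e3 x y z = (\<lambda>a b c. if a = x \<and> b = y \<and> c = z then 1 else 0)"

definition e1 :: "'a::{order,finite} \<Rightarrow> ('a \<Rightarrow> 'a \<Rightarrow> 'a \<Rightarrow> 'r::comm_ring_1)" where
  "e1 x = e3 x x x"

definition derivation3 ::
  "(('a::{order,finite} \<Rightarrow> 'a \<Rightarrow> 'a \<Rightarrow> 'r::comm_ring_1) \<Rightarrow> ('a \<Rightarrow> 'a \<Rightarrow> 'a \<Rightarrow> 'r)) \<Rightarrow> bool" where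
  "derivation3 D \<longleftrightarrow>
     (\<forall>f \<in> I3. D f \<in> I3) \<and>
     (\<forall>f \<in> I3. \<forall>g \<in> I3. D (\<lambda>x y z. f x y z + g x y z) = (\<lambda>x y z. D f x y z + D g x y z)) \<and>
     (\<forall>r. \<forall>f \<in> I3. D (\<lambda>x y z. r * f x y z) = (\<lambda>x y z. r * D f x y z)) \<and>
     (\<forall>f \<in> I3. \<forall>g \<in> I3. D (mult3 f g) = (\<lambda>x y z. mult3 (D f) g x y z + mult3 f (D g) x y z))"

end

theory Submission
  imports Defs
begin

text \<open>Since \<open>e\<^sub>x\<close> is idempotent, the Leibniz rule gives \<open>d = d e\<^sub>x + e\<^sub>x d\<close> for
  \<open>d = D(e\<^sub>x)\<close>. Right multiplication by \<open>e\<^sub>x\<close> keeps only the entries \<open>d(u,x,x)\<close> and left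
  multiplication only the entries \<open>d(x,x,v)\<close>, so \<open>d\<close> is supported on these triples; at
  \<open>(x,x,x)\<close> the identity reads \<open>d(x,x,x) = 2 d(x,x,x)\<close>, hence that entry vanishes.\<close>

lemma e1_in_I3: "(e1 x :: 'a::{order,finite} \<Rightarrow> 'a \<Rightarrow> 'a \<Rightarrow> 'r::comm_ring_1) \<in> I3"
  by (auto simp: I3_def e1_def e3_def)

lemma mult3_e1_right:
  fixes f :: "'a::{order,finite} \<Rightarrow> 'a \<Rightarrow> 'a \<Rightarrow> 'r::comm_ring_1"
  shows "mult3 f (e1 x) a b c = (if a \<le> b \<and> b = x \<and> c = x then f a x x else 0)"
proof -
  let ?S = "{(y1, y2). a \<le> y1 \<and> y1 \<le> b \<and> b \<le> y2 \<and> y2 \<le> c}"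
  have "(\<Sum>(y1, y2) \<in> ?S. f a y1 y2 * e1 x y1 y2 c)
      = (\<Sum>p \<in> ?S. if p = (x, x) then (if c = x then f a x x else 0) else 0)"
    by (rule sum.cong) (auto simp: e1_def e3_def split: if_splits)
  also have "\<dots> = (if (x, x) \<in> ?S then (if c = x then f a x x else 0) else 0)"
    by (simp only: sum.delta finite)
  finally show ?thesis
    unfolding mult3_def using order_antisym by auto
qed

lemma mult3_e1_left:
  fixes f :: "'a::{order,finite} \<Rightarrow> 'a \<Rightarrow> 'a \<Rightarrow> 'r::comm_ring_1"
  shows "mult3 (e1 x) f a b c = (if b \<le> c \<and> a = x \<and> b = x then f x x c else 0)"
proof -
  let ?S = "{(y1, y2). a \<le> y1 \<and> y1 \<le> b \<and> b \<le> y2 \<and> y2 \<le> c}"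
  have "(\<Sum>(y1, y2) \<in> ?S. e1 x a y1 y2 * f y1 y2 c)
      = (\<Sum>p \<in> ?S. if p = (x, x) then (if a = x then f x x c else 0) else 0)"
    by (rule sum.cong) (auto simp: e1_def e3_def split: if_splits)
  also have "\<dots> = (if (x, x) \<in> ?S then (if a = x then f x x c else 0) else 0)"
    by (simp only: sum.delta finite)
  finally show ?thesis
    unfolding mult3_def using order_antisym by auto
qed

lemma mult3_e1_idem: "mult3 (e1 x) (e1 x) = (e1 x :: 'a::{order,finite} \<Rightarrow> 'a \<Rightarrow> 'a \<Rightarrow> 'r::comm_ring_1)"
  by (simp add: fun_eq_iff mult3_e1_left) (auto simp: e1_def e3_def)

lemma derivation3_idempotent_eq:
  assumes "derivation3 D" and "e \<in> I3" and "mult3 e e = e"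
  shows "D e = (\<lambda>a b c. mult3 (D e) e a b c + mult3 e (D e) a b c)"
  using assms unfolding derivation3_def by metis

lemma sum_e3_last:
  fixes g :: "'a::{order,finite} \<Rightarrow> 'r::comm_ring_1"
  shows "(\<Sum>v \<in> S. g v * e3 p q v a b c) = (if a = p \<and> b = q \<and> c \<in> S then g c else 0)"
proof -
  have "(\<Sum>v \<in> S. g v * e3 p q v a b c) = (\<Sum>v \<in> S. if v = c then (if a = p \<and> b = q then g c else 0) else 0)"
    by (rule sum.cong) (auto simp: e3_def)
  then show ?thesis
    by (simp add: sum.delta)
qed

lemma sum_e3_first:
  fixes g :: "'a::{order,finite} \<Rightarrow> 'r::comm_ring_1"
  shows "(\<Sum>u \<in> S. g u * e3 u q r a b c) = (if a \<in> S \<and> b = q \<and> c = r then g a else 0)"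
proof -
  have "(\<Sum>u \<in> S. g u * e3 u q r a b c) = (\<Sum>u \<in> S. if u = a then (if b = q \<and> c = r then g a else 0) else 0)"
    by (rule sum.cong) (auto simp: e3_def)
  then show ?thesis
    by (auto simp: sum.delta)
qed

lemma Peirce_off_diagonal_e1:
  fixes d :: "'a::{order,finite} \<Rightarrow> 'a \<Rightarrow> 'a \<Rightarrow> 'r::comm_ring_1"
  assumes "d \<in> I3" and "d = (\<lambda>a b c. mult3 d (e1 x) a b c + mult3 (e1 x) d a b c)"
  shows "d a b c = (if a = x \<and> b = x \<and> x < c then d x x c else 0)
                 + (if a < x \<and> b = x \<and> c = x then d a x x else 0)"
proof -
  have entry: "d a b c = (if a \<le> b \<and> b = x \<and> c = x then d a x x else 0)
                       + (if b \<le> c \<and> a = x \<and> b = x then d x x c else 0)" for a b c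
    by (subst assms(2)) (simp add: mult3_e1_right mult3_e1_left)
  have "d a b c = 0" if "b \<noteq> x \<or> a \<noteq> x \<and> c \<noteq> x"
    using entry[of a b c] that by auto
  moreover have "d x x x = 0"
    using entry[of x x x] by simp
  moreover have "d a b c = 0" if "\<not> (a \<le> b \<and> b \<le> c)"
    using assms(1) that unfolding I3_def by blast
  ultimately show ?thesis
    by (auto simp: less_le)
qed

theorem lemma4p1:
  fixes D :: "('a::{order,finite} \<Rightarrow> 'a \<Rightarrow> 'a \<Rightarrow> 'r::comm_ring_1) \<Rightarrow> ('a \<Rightarrow> 'a \<Rightarrow> 'a \<Rightarrow> 'r)"
    and x :: 'a
  assumes "derivation3 D"
  shows "D (e1 x) = (\<lambda>a b c.
           (\<Sum>v \<in> {v. x < v}. D (e1 x) x x v * e3 x x v a b c)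
         + (\<Sum>u \<in> {u. u < x}. D (e1 x) u x x * e3 u x x a b c))"
proof (intro ext)
  fix a b c
  have "D (e1 x) \<in> I3"
    using assms e1_in_I3 unfolding derivation3_def by blast
  moreover have "D (e1 x) = (\<lambda>a b c. mult3 (D (e1 x)) (e1 x) a b c + mult3 (e1 x) (D (e1 x)) a b c)"
    using derivation3_idempotent_eq[OF assms e1_in_I3 mult3_e1_idem] .
  ultimately show "D (e1 x) a b c = (\<Sum>v \<in> {v. x < v}. D (e1 x) x x v * e3 x x v a b c)
         + (\<Sum>u \<in> {u. u < x}. D (e1 x) u x x * e3 u x x a b c)"
    unfolding sum_e3_last sum_e3_first mem_Collect_eq by (rule Peirce_off_diagonal_e1)
qed

end
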